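(* Let $T$ be an expanding Markov map with a finite partition, $x\in[0,1]$ and $\kappa>0$. Then $\{y\in[0,1]:\overline R(x,y)>1/\kappa\}\subset\mathcal B^\kappa(x)\subset\{y\in[0,1]:\overline R(x,y)\ge1/\kappa\}$ and $\{y\in[0,1]:\overline R(x,y)<1/\kappa\}\subset\mathcal U^\kappa(x)\subset\{y\in[0,1]:\overline R(x,y)\le1/\kappa\}$.
   Context: An expanding Markov map with a finite partition is a map $T:[0,1]\to[0,1]$ for which there are points $0=a_0<\dots<a_Q=1$, with $I(i)=(a_i,a_{i+1})$, such that: (1) there are $n_0\in\mathbb N$, $\rho>1$ with $|(T^{n_0})'|\ge\rho$; (2) $T$ is strictly monotonic on each $I(i)$ and extends to a $C^2$ function on each $\overline{I(i)}$; (3) if $I(j)\cap T(I(k))\ne\emptyset$ then $I(j)\subset T(I(k))$; (4) there is $R$ with $I(j)\subset\bigcup_{n=1}^RT^n(I(k))$ for all $j,k$; (5) for every $k$, $\sup_{(x,y,z)\in I(k)^3}|T''(x)|/(|T'(y)||T'(z)|)<\infty$. $B(z,r)$ is the open ball. $\mathcal U^\kappa(x)=\bigcup_{i\ge1}\bigcap_{N\ge i}\bigcup_{n=1}^NB(T^nx,N^{-\kappa})$, $\mathcal B^\kappa(x)=[0,1]\setminus\mathcal U^\kappa(x)$. Hitting time: $\tau_r(x,y)=\inf\{n\ge1:T^nx\in B(y,r)\}$, and $\overline R(x,y)=\limsup_{r\to0}\frac{\log\tau_r(x,y)}{-\log r}$, with the convention that if $\{T^nx:n\ge1\}\cap B(y,r)=\emptyset$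 for some $r>0$ then $\tau_r(x,y)=\infty$ and $\overline R(x,y)=\infty$. *)

theory Defs
  imports "HOL-Analysis.Analysis" "HOL-Library.Extended_Nat"
begin

definition part_int :: "(nat \<Rightarrow> real) \<Rightarrow> nat \<Rightarrow> real set" where
  "part_int a i = {a i <..< a (Suc i)}"

definition C2_extends_on :: "(real \<Rightarrow> real) \<Rightarrow> real \<Rightarrow> real \<Rightarrow> bool" where
  "C2_extends_on T lo hi \<longleftrightarrow>
     (\<exists>g g1 g2. (\<forall>y\<in>{lo..hi}. (g has_real_derivative g1 y) (at y within {lo..hi})
                          \<and> (g1 has_real_derivative g2 y) (at y within {lo..hi}))
               \<and> continuous_on {lo..hi} g2
               \<and> (\<forall>y\<in>{lo<..<hi}. g y = T y))"

definition expanding_markov_map :: "(real \<Rightarrow> real) \<Rightarrow> bool" where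
  "expanding_markov_map T \<longleftrightarrow>
     (\<forall>x\<in>{0..1}. T x \<in> {0..1}) \<and>
     (\<exists>(Q::nat) (a::nat \<Rightarrow> real).
        Q \<ge> 1 \<and> a 0 = 0 \<and> a Q = 1 \<and> (\<forall>i<Q. a i < a (Suc i)) \<and>
        \<comment> \<open>(1) uniform expansion of an iterate (where T^n0 is differentiable,
              i.e. along orbits staying in the open partition intervals)\<close>
        (\<exists>(n0::nat) (\<rho>::real). n0 \<ge> 1 \<and> \<rho> > 1 \<and>
            (\<forall>x. (\<forall>k<n0. \<exists>i<Q. (T^^k) x \<in> part_int a i) \<longrightarrow>
                 (\<exists>D. ((T^^n0) has_real_derivative D) (at x) \<and> \<bar>D\<bar> \<ge> \<rho>))) \<and>
        \<comment> \<open>(2) strictly monotone, C^2 extension to the closure\<close>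
        (\<forall>i<Q. (strict_mono_on (part_int a i) T \<or> strict_antimono_on (part_int a i) T)
               \<and> C2_extends_on T (a i) (a (Suc i))) \<and>
        \<comment> \<open>(3) Markov property\<close>
        (\<forall>j<Q. \<forall>k<Q. part_int a j \<inter> T ` part_int a k \<noteq> {} \<longrightarrow>
                      part_int a j \<subseteq> T ` part_int a k) \<and>
        \<comment> \<open>(4) transitivity\<close>
        (\<exists>R::nat. \<forall>j<Q. \<forall>k<Q. part_int a j \<subseteq> (\<Union>n\<in>{1..R}. (T^^n) ` part_int a k)) \<and>
        \<comment> \<open>(5) bounded distortion: sup |T''(x)|/(|T'(y)||T'(z)|) < \<infinity>\<close>
        (\<forall>k<Q. \<exists>C::real. \<forall>x\<in>part_int a k. \<forall>y\<in>part_int a k. \<forall>z\<in>part_int a k.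
              \<bar>deriv (deriv T) x\<bar> \<le> C * \<bar>deriv T y\<bar> * \<bar>deriv T z\<bar>))"

definition U_set :: "(real \<Rightarrow> real) \<Rightarrow> real \<Rightarrow> real \<Rightarrow> real set" where
  "U_set T \<kappa> x = (\<Union>i\<in>{1..}. \<Inter>N\<in>{i..}. \<Union>n\<in>{1..N}. (ball ((T^^n) x) (real N powr (-\<kappa>)) \<inter> {0..1}))"

definition B_set :: "(real \<Rightarrow> real) \<Rightarrow> real \<Rightarrow> real \<Rightarrow> real set" where
  "B_set T \<kappa> x = {0..1} - U_set T \<kappa> x"

definition hit_time :: "(real \<Rightarrow> real) \<Rightarrow> real \<Rightarrow> real \<Rightarrow> real \<Rightarrow> enat" where
  "hit_time T r x y =
     (if \<exists>n::nat. n \<ge> 1 \<and> (T^^n) x \<in> ball y r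
      then enat (LEAST n::nat. n \<ge> 1 \<and> (T^^n) x \<in> ball y r) else \<infinity>)"

definition R_upper :: "(real \<Rightarrow> real) \<Rightarrow> real \<Rightarrow> real \<Rightarrow> ereal" where
  "R_upper T x y =
     (if \<exists>r>0. hit_time T r x y = \<infinity> then \<infinity>
      else Limsup (at_right 0)
             (\<lambda>r. ereal (ln (real (the_enat (hit_time T r x y))) / (- ln r))))"

end

theory Submission
  imports Defs
begin

text \<open>Visiting the ball of radius \<open>N\<^sup>-\<^sup>\<kappa>\<close> within time \<open>N\<close> is, after the change of scale
  \<open>r = N\<^sup>-\<^sup>\<kappa>\<close>, the same as hitting the ball of radius \<open>r\<close> within time \<open>r\<^sup>-\<^sup>1\<^sup>/\<^sup>\<kappa>\<close>.
  Hence \<open>y \<in> \<U>\<^sup>\<kappa>(x)\<close> gives \<open>\<tau>\<^sub>r(x,y) \<le> 2 r\<^sup>-\<^sup>1\<^sup>/\<^sup>\<kappa>\<close> for small \<open>r\<close>, so \<open>R(x,y) \<le> 1/\<kappa>\<close>;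
  conversely \<open>R(x,y) < 1/\<kappa>\<close> gives \<open>\<tau>\<^sub>r(x,y) < r\<^sup>-\<^sup>1\<^sup>/\<^sup>\<kappa>\<close> for small \<open>r\<close>, so \<open>y \<in> \<U>\<^sup>\<kappa>(x)\<close>.
  The remaining two inclusions are the contrapositives.\<close>

lemma eventually_at_right_0_less_1: "\<forall>\<^sub>F r in at_right (0::real). 0 < r \<and> r < 1"
  unfolding eventually_at_right_field by (intro exI[of _ 1]) auto

lemma filterlim_powr_neg_at_right_0:
  assumes "\<kappa> > 0"
  shows "filterlim (\<lambda>N::nat. real N powr (-\<kappa>)) (at_right 0) sequentially"
proof (rule tendsto_imp_filterlim_at_right)
  show "((\<lambda>N::nat. real N powr (-\<kappa>)) \<longlongrightarrow> 0) sequentially"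
    using assms by (intro tendsto_neg_powr filterlim_real_sequentially) auto
  show "\<forall>\<^sub>F N in sequentially. real N powr (-\<kappa>) > 0"
    using eventually_gt_at_top[of 0] by eventually_elim simp
qed

lemma Limsup_ln_ratio_le:
  fixes t :: "real \<Rightarrow> real"
  assumes "C > 0" and bound: "\<forall>\<^sub>F r in at_right 0. 0 < t r \<and> t r \<le> C * r powr (-a)"
  shows "Limsup (at_right 0) (\<lambda>r. ereal (ln (t r) / - ln r)) \<le> ereal a"
proof -
  have "\<forall>\<^sub>F r in at_right 0. ereal (ln (t r) / - ln r) \<le> ereal (ln C / - ln r + a)"
    using bound eventually_at_right_0_less_1
  proof eventually_elim
    case (elim r)
    then have "ln (t r) \<le> ln (C * r powr (-a))"
      using \<open>C > 0\<close> by (subst ln_le_cancel_iff) auto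
    also have "\<dots> = ln C - a * ln r"
      using \<open>C > 0\<close> elim by (simp add: ln_mult)
    finally have "ln (t r) \<le> ln C - a * ln r" .
    moreover have "- ln r > 0" using elim by simp
    ultimately show ?case by (simp add: field_simps)
  qed
  then have "Limsup (at_right 0) (\<lambda>r. ereal (ln (t r) / - ln r))
      \<le> Limsup (at_right 0) (\<lambda>r. ereal (ln C / - ln r + a))"
    by (rule Limsup_mono)
  also have "\<dots> = ereal a"
  proof (rule lim_imp_Limsup)
    have "filterlim (\<lambda>r::real. - ln r) at_infinity (at_right 0)"
      using ln_at_0 by (intro filterlim_at_top_imp_at_infinity) (simp add: filterlim_uminus_at_bot)
    then have "((\<lambda>r. ln C / - ln r + a) \<longlongrightarrow> 0 + a) (at_right 0)"
      by (intro tendsto_add tendsto_divide_0[OF tendsto_const] tendsto_const)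
    then show "((\<lambda>r. ereal (ln C / - ln r + a)) \<longlongrightarrow> ereal a) (at_right 0)"
      by simp
  qed simp
  finally show ?thesis .
qed

lemma eventually_less_powr_of_Limsup_ln_ratio_less:
  fixes t :: "real \<Rightarrow> real"
  assumes pos: "\<forall>\<^sub>F r in at_right 0. 0 < t r"
    and less: "Limsup (at_right 0) (\<lambda>r. ereal (ln (t r) / - ln r)) < ereal a"
  shows "\<forall>\<^sub>F r in at_right 0. t r < r powr (-a)"
  using pos Limsup_lessD[OF less] eventually_at_right_0_less_1
proof eventually_elim
  case (elim r)
  then have "ln (t r) < - a * ln r"
    by (simp add: field_simps)
  then have "exp (ln (t r)) < exp (- a * ln r)"
    by (rule exp_less_mono)
  then show ?case using elim by (simp add: powr_def)
qed

definition hits_within :: "(real \<Rightarrow> real) \<Rightarrow> real \<Rightarrow> real \<Rightarrow> real \<Rightarrow> nat \<Rightarrow> bool" where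
  "hits_within T r x y N \<longleftrightarrow> (\<exists>n\<in>{1..N}. (T^^n) x \<in> ball y r)"

lemma hits_within_mono: "hits_within T r x y N \<Longrightarrow> r \<le> r' \<Longrightarrow> hits_within T r' x y N"
  unfolding hits_within_def by force

lemma hit_time_le_enat_iff: "hit_time T r x y \<le> enat N \<longleftrightarrow> hits_within T r x y N"
proof (cases "\<exists>n::nat. n \<ge> 1 \<and> (T^^n) x \<in> ball y r")
  case True
  let ?L = "LEAST n::nat. n \<ge> 1 \<and> (T^^n) x \<in> ball y r"
  have L: "?L \<ge> 1" "(T^^?L) x \<in> ball y r" using LeastI_ex[OF True] by auto
  have "?L \<le> N \<longleftrightarrow> hits_within T r x y N"
  proof
    assume "?L \<le> N"
    then show "hits_within T r x y N" using L unfolding hits_within_def by auto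
  next
    assume "hits_within T r x y N"
    then obtain n where "n \<in> {1..N}" "(T^^n) x \<in> ball y r" unfolding hits_within_def by blast
    then have "?L \<le> n" by (intro Least_le) auto
    then show "?L \<le> N" using \<open>n \<in> {1..N}\<close> by auto
  qed
  then show ?thesis using True by (simp add: hit_time_def)
next
  case False
  then show ?thesis by (auto simp: hit_time_def hits_within_def)
qed

lemma hit_time_pos: "hit_time T r x y = enat n \<Longrightarrow> 0 < n"
  using hit_time_le_enat_iff[of T r x y 0] by (auto simp: hits_within_def)

lemma hit_time_antimono:
  assumes "r \<le> r'"
  shows "hit_time T r' x y \<le> hit_time T r x y"
proof (cases "hit_time T r x y")
  case (enat n)
  then have "hits_within T r x y n" by (simp flip: hit_time_le_enat_iff)
  then have "hits_within T r' x y n" using assms by (rule hits_within_mono)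
  then show ?thesis using enat by (simp add: hit_time_le_enat_iff)
qed simp

lemma R_upper_eq_Limsup:
  assumes "\<forall>r>0. hit_time T r x y \<noteq> \<infinity>"
  shows "R_upper T x y =
    Limsup (at_right 0) (\<lambda>r. ereal (ln (real (the_enat (hit_time T r x y))) / - ln r))"
  unfolding R_upper_def by (rule if_not_P) (use assms in blast)

lemma eventually_pos_the_enat_hit_time:
  assumes "\<forall>r>0. hit_time T r x y \<noteq> \<infinity>"
  shows "\<forall>\<^sub>F r in at_right 0. 0 < real (the_enat (hit_time T r x y))"
  using eventually_at_right_less[of 0]
proof eventually_elim
  case (elim r)
  then obtain n where "hit_time T r x y = enat n" using assms by (cases "hit_time T r x y") auto
  then show ?case using hit_time_pos by fastforce
qed

lemma mem_U_set_iff: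
  "y \<in> U_set T \<kappa> x \<longleftrightarrow>
     y \<in> {0..1} \<and> (\<forall>\<^sub>F N in sequentially. hits_within T (real N powr (-\<kappa>)) x y N)"
proof -
  have "y \<in> U_set T \<kappa> x \<longleftrightarrow>
      y \<in> {0..1} \<and> (\<exists>i\<ge>1. \<forall>N\<ge>i. hits_within T (real N powr (-\<kappa>)) x y N)"
    unfolding U_set_def hits_within_def by (auto simp: dist_commute)
  also have "(\<exists>i\<ge>1. \<forall>N\<ge>i. hits_within T (real N powr (-\<kappa>)) x y N)
      \<longleftrightarrow> (\<forall>\<^sub>F N in sequentially. hits_within T (real N powr (-\<kappa>)) x y N)"
    unfolding eventually_sequentially by (metis max.bounded_iff max.cobounded2 nle_le)
  finally show ?thesis .
qed

lemma mem_U_set_of_R_upper_less: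
  assumes "\<kappa> > 0" and "y \<in> {0..1}" and R: "R_upper T x y < ereal (1/\<kappa>)"
  shows "y \<in> U_set T \<kappa> x"
proof -
  define t where "t r = real (the_enat (hit_time T r x y))" for r
  have finite: "\<forall>r>0. hit_time T r x y \<noteq> \<infinity>"
    using R by (auto simp: R_upper_def split: if_splits)
  have "\<forall>\<^sub>F r in at_right 0. t r < r powr (-1/\<kappa>)"
    using eventually_less_powr_of_Limsup_ln_ratio_less[of t "1/\<kappa>"] R
      eventually_pos_the_enat_hit_time[OF finite] R_upper_eq_Limsup[OF finite]
    by (simp add: t_def)
  then have "\<forall>\<^sub>F N in sequentially. t (real N powr (-\<kappa>)) < (real N powr (-\<kappa>)) powr (-1/\<kappa>)"
    using filterlim_powr_neg_at_right_0[OF \<open>\<kappa> > 0\<close>] by (rule eventually_compose_filterlim)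
  then have "\<forall>\<^sub>F N in sequentially. hits_within T (real N powr (-\<kappa>)) x y N"
    using eventually_gt_at_top[of 0]
  proof eventually_elim
    case (elim N)
    then have "t (real N powr (-\<kappa>)) < real N"
      using \<open>\<kappa> > 0\<close> by (simp add: powr_powr)
    moreover obtain n where "hit_time T (real N powr (-\<kappa>)) x y = enat n"
      using finite[rule_format, of "real N powr (-\<kappa>)"] elim
      by (cases "hit_time T (real N powr (-\<kappa>)) x y") auto
    ultimately show ?case by (simp add: t_def flip: hit_time_le_enat_iff)
  qed
  then show ?thesis using \<open>y \<in> {0..1}\<close> by (simp add: mem_U_set_iff)
qed

lemma eventually_hit_time_le_of_mem_U_set:
  assumes "\<kappa> > 0" and "y \<in> U_set T \<kappa> x"
  shows "\<forall>\<^sub>F r in at_right 0. hit_time T r x y \<le> enat (nat \<lceil>r powr (-1/\<kappa>)\<rceil>)"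
proof -
  obtain i :: nat where "i \<ge> 1" and hits: "\<And>N. N \<ge> i \<Longrightarrow> hits_within T (real N powr (-\<kappa>)) x y N"
    using assms(2) unfolding mem_U_set_iff eventually_sequentially by (metis max.bounded_iff nle_le)
  show ?thesis
    unfolding eventually_at_right_field
  proof (intro exI[of _ "real i powr (-\<kappa>)"] conjI allI impI)
    show "real i powr (-\<kappa>) > 0" using \<open>i \<ge> 1\<close> by simp
    fix r :: real
    assume "0 < r" and r_less: "r < real i powr (-\<kappa>)"
    define N where "N = nat \<lceil>r powr (-1/\<kappa>)\<rceil>"
    have "real i = (real i powr (-\<kappa>)) powr (-1/\<kappa>)"
      using \<open>\<kappa> > 0\<close> by (simp add: powr_powr)
    also have "\<dots> < r powr (-1/\<kappa>)"
      using \<open>0 < r\<close> r_less \<open>\<kappa> > 0\<close> by (intro powr_less_mono2_neg) auto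
    also have "\<dots> \<le> real N" unfolding N_def by linarith
    finally have "i \<le> N" by simp
    have "real N powr (-\<kappa>) \<le> (r powr (-1/\<kappa>)) powr (-\<kappa>)"
      using \<open>0 < r\<close> \<open>\<kappa> > 0\<close> by (intro powr_mono2') (auto simp: N_def)
    also have "\<dots> = r" using \<open>0 < r\<close> \<open>\<kappa> > 0\<close> by (simp add: powr_powr)
    finally have "hits_within T r x y N" using hits[OF \<open>i \<le> N\<close>] by (rule hits_within_mono[rotated])
    then show "hit_time T r x y \<le> enat N" by (simp add: hit_time_le_enat_iff)
  qed
qed

lemma R_upper_le_of_mem_U_set:
  assumes "\<kappa> > 0" and "y \<in> U_set T \<kappa> x"
  shows "R_upper T x y \<le> ereal (1/\<kappa>)"
proof -
  note bound = eventually_hit_time_le_of_mem_U_set[OF assms]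
  have finite: "\<forall>r>0. hit_time T r x y \<noteq> \<infinity>"
  proof (intro allI impI)
    fix r :: real
    assume "r > 0"
    obtain b where "b > 0"
      and b: "\<And>r'. 0 < r' \<Longrightarrow> r' < b \<Longrightarrow> hit_time T r' x y \<le> enat (nat \<lceil>r' powr (-1/\<kappa>)\<rceil>)"
      using bound unfolding eventually_at_right_field by auto
    define r' where "r' = min r (b/2)"
    have "0 < r'" "r' < b" "r' \<le> r" using \<open>r > 0\<close> \<open>b > 0\<close> by (auto simp: r'_def)
    then have "hit_time T r x y \<le> enat (nat \<lceil>r' powr (-1/\<kappa>)\<rceil>)"
      using b hit_time_antimono[of r' r] order_trans by blast
    then show "hit_time T r x y \<noteq> \<infinity>" by (cases "hit_time T r x y") simp_all
  qed
  have "\<forall>\<^sub>F r in at_right 0.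
      0 < real (the_enat (hit_time T r x y)) \<and> real (the_enat (hit_time T r x y)) \<le> 2 * r powr (-1/\<kappa>)"
    using bound eventually_pos_the_enat_hit_time[OF finite] eventually_at_right_0_less_1
  proof eventually_elim
    case (elim r)
    have "1 \<le> r powr (-1/\<kappa>)"
      using elim \<open>\<kappa> > 0\<close> powr_mono'[of "-1/\<kappa>" 0 r] by simp
    obtain n where n: "hit_time T r x y = enat n"
      using finite elim by (cases "hit_time T r x y") auto
    then have "real n \<le> real (nat \<lceil>r powr (-1/\<kappa>)\<rceil>)" using elim by simp
    also have "\<dots> \<le> 2 * r powr (-1/\<kappa>)" using \<open>1 \<le> r powr (-1/\<kappa>)\<close> by linarith
    finally show ?case using elim n by simp
  qed
  then show ?thesis
    using Limsup_ln_ratio_le[of 2] R_upper_eq_Limsup[OF finite] by simp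
qed

theorem lemma4p2:
  fixes T :: "real \<Rightarrow> real" and x \<kappa> :: real
  assumes "expanding_markov_map T" and "x \<in> {0..1}" and "\<kappa> > 0"
  shows "{y\<in>{0..1}. R_upper T x y > ereal (1/\<kappa>)} \<subseteq> B_set T \<kappa> x
       \<and> B_set T \<kappa> x \<subseteq> {y\<in>{0..1}. R_upper T x y \<ge> ereal (1/\<kappa>)}
       \<and> {y\<in>{0..1}. R_upper T x y < ereal (1/\<kappa>)} \<subseteq> U_set T \<kappa> x
       \<and> U_set T \<kappa> x \<subseteq> {y\<in>{0..1}. R_upper T x y \<le> ereal (1/\<kappa>)}"
proof -
  have U_le: "U_set T \<kappa> x \<subseteq> {y\<in>{0..1}. R_upper T x y \<le> ereal (1/\<kappa>)}"
    using R_upper_le_of_mem_U_set[OF \<open>\<kappa> > 0\<close>] by (auto simp: mem_U_set_iff)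
  have less_U: "{y\<in>{0..1}. R_upper T x y < ereal (1/\<kappa>)} \<subseteq> U_set T \<kappa> x"
    using mem_U_set_of_R_upper_less[OF \<open>\<kappa> > 0\<close>] by auto
  have "{y\<in>{0..1}. R_upper T x y > ereal (1/\<kappa>)} \<subseteq> B_set T \<kappa> x"
    using U_le by (auto simp: B_set_def not_le[symmetric])
  moreover have "B_set T \<kappa> x \<subseteq> {y\<in>{0..1}. R_upper T x y \<ge> ereal (1/\<kappa>)}"
    using less_U by (auto simp: B_set_def not_less[symmetric])
  ultimately show ?thesis using U_le less_U by blast
qed

end
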